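(* Let $H$ and $E$ be Hilbert spaces, let $T:H\to H$ be a bounded linear operator with $\ker T=\{0\}$, let $\gamma:E\to H$ be a bounded linear operator with $\ker\gamma=\{0\}$ and $\mathcal{R}(T)\cap\mathcal{R}(\gamma)=\{0\}$, and let $\Lambda$ be a linear operator in $E$ with domain $\mathcal{D}(\Lambda)$. Define $A,\Gamma_0$ on $\mathcal{R}(T)\dot+\mathcal{R}(\gamma)$ by $A(Tf+\gamma\varphi)=f$, $\Gamma_0(Tf+\gamma\varphi)=\varphi$, and $\Gamma_1$ on $\mathcal{R}(T)\dot+\gamma\mathcal{D}(\Lambda)$ by $\Gamma_1(Tf+\gamma\varphi)=\gamma^*f+\Lambda\varphi$. For $\lambda\in\mathbb{C}$ with $I-\lambda T$ boundedly invertible, let $M(\lambda)$ be defined by $M(\lambda)\Gamma_0u=\Gamma_1u$ for $u\in\ker(A-\lambda I)\cap\mathcal{D}(\Gamma_1)$. Then $\lambda\mapsto M(\lambda)-M(0)$, defined for $\lambda$ with $I-\lambda T$ boundedly invertible, is an analytic operator-function whose values are bounded operators in $E$.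
   Context: $\mathcal{R}(\cdot)$ denotes range, $\dot+$ direct sum, $\gamma^*$ the adjoint of $\gamma$. Note $M(0)=\Lambda$ on $\mathcal{D}(\Lambda)$; the statement means $M(\lambda)-M(0)$, defined on $\mathcal{D}(\Lambda)$, extends to a bounded operator on $E$ depending analytically on $\lambda$. *)

theory Defs
  imports "HOL-Analysis.Analysis"
begin

class complex_vector = real_vector +
  fixes scaleC :: "complex \<Rightarrow> 'a \<Rightarrow> 'a" (infixr "*\<^sub>C" 75)
  assumes scaleC_add_right: "scaleC a (x + y) = scaleC a x + scaleC a y"
    and scaleC_add_left: "scaleC (a + b) x = scaleC a x + scaleC b x"
    and scaleC_scaleC: "scaleC a (scaleC b x) = scaleC (a * b) x"
    and scaleC_one: "scaleC 1 x = x"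
    and scaleR_scaleC: "scaleR r x = scaleC (complex_of_real r) x"

class complex_inner = complex_vector + real_normed_vector +
  fixes cinner :: "'a \<Rightarrow> 'a \<Rightarrow> complex"
  assumes cinner_commute: "cinner x y = cnj (cinner y x)"
    and cinner_add_left: "cinner (x + y) z = cinner x z + cinner y z"
    and cinner_scaleC_left: "cinner (scaleC r x) y = cnj r * cinner x y"
    and cinner_nonneg: "0 \<le> Re (cinner x x)"
    and cinner_eq_zero_iff: "cinner x x = 0 \<longleftrightarrow> x = 0"
    and norm_eq_sqrt_cinner: "norm x = sqrt (Re (cinner x x))"

class chilbert = complex_inner + complete_space

definition clinear :: "('a::complex_vector \<Rightarrow> 'b::complex_vector) \<Rightarrow> bool" where
  "clinear f \<longleftrightarrow> (\<forall>x y. f (x + y) = f x + f y) \<and> (\<forall>c x. f (c *\<^sub>C x) = c *\<^sub>C f x)"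

definition bounded_clinear :: "('a::complex_inner \<Rightarrow> 'b::complex_inner) \<Rightarrow> bool" where
  "bounded_clinear f \<longleftrightarrow> clinear f \<and> (\<exists>K. \<forall>x. norm (f x) \<le> norm x * K)"

definition csubspace :: "'a::complex_vector set \<Rightarrow> bool" where
  "csubspace S \<longleftrightarrow> 0 \<in> S \<and> (\<forall>x\<in>S. \<forall>y\<in>S. x + y \<in> S) \<and> (\<forall>c. \<forall>x\<in>S. c *\<^sub>C x \<in> S)"

definition clinear_operator :: "'a::complex_vector set \<Rightarrow> ('a \<Rightarrow> 'b::complex_vector) \<Rightarrow> bool" where
  "clinear_operator D L \<longleftrightarrow> csubspace D \<and>
     (\<forall>x\<in>D. \<forall>y\<in>D. L (x + y) = L x + L y) \<and> (\<forall>c. \<forall>x\<in>D. L (c *\<^sub>C x) = c *\<^sub>C L x)"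

definition boundedly_invertible :: "('a::complex_inner \<Rightarrow> 'a) \<Rightarrow> bool" where
  "boundedly_invertible F \<longleftrightarrow>
     (\<exists>S. bounded_clinear S \<and> (\<forall>x. S (F x) = x) \<and> (\<forall>x. F (S x) = x))"

definition adjoint_op :: "('e::complex_inner \<Rightarrow> 'h::complex_inner) \<Rightarrow> 'h \<Rightarrow> 'e" where
  "adjoint_op g f = (THE y. \<forall>e. cinner y e = cinner f (g e))"

definition domA :: "('h \<Rightarrow> 'h::complex_vector) \<Rightarrow> ('e \<Rightarrow> 'h) \<Rightarrow> 'h set" where
  "domA T g = {T f + g \<phi> | f \<phi>. True}"

definition opA :: "('h \<Rightarrow> 'h::complex_vector) \<Rightarrow> ('e \<Rightarrow> 'h) \<Rightarrow> 'h \<Rightarrow> 'h" where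
  "opA T g u = (THE f. \<exists>\<phi>. u = T f + g \<phi>)"

definition Gamma0 :: "('h \<Rightarrow> 'h::complex_vector) \<Rightarrow> ('e \<Rightarrow> 'h) \<Rightarrow> 'h \<Rightarrow> 'e" where
  "Gamma0 T g u = (THE \<phi>. \<exists>f. u = T f + g \<phi>)"

definition domGamma1 :: "('h \<Rightarrow> 'h::complex_vector) \<Rightarrow> ('e \<Rightarrow> 'h) \<Rightarrow> 'e set \<Rightarrow> 'h set" where
  "domGamma1 T g D = {T f + g \<phi> | f \<phi>. \<phi> \<in> D}"

definition Gamma1 :: "('h \<Rightarrow> 'h::complex_inner) \<Rightarrow> ('e::complex_inner \<Rightarrow> 'h) \<Rightarrow> ('e \<Rightarrow> 'e) \<Rightarrow> 'h \<Rightarrow> 'e" where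
  "Gamma1 T g L u = adjoint_op g (opA T g u) + L (Gamma0 T g u)"

definition kerAz :: "('h \<Rightarrow> 'h::complex_inner) \<Rightarrow> ('e::complex_inner \<Rightarrow> 'h) \<Rightarrow> 'e set \<Rightarrow> complex \<Rightarrow> 'h set" where
  "kerAz T g D z = {u \<in> domGamma1 T g D. opA T g u = z *\<^sub>C u}"

text \<open>Graph of M(z): pairs \<open>(Gamma0 u, Gamma1 u)\<close>, u in \<open>ker (A - z I) \<inter> D(Gamma1)\<close>.\<close>
definition Mgraph :: "('h \<Rightarrow> 'h::complex_inner) \<Rightarrow> ('e::complex_inner \<Rightarrow> 'h) \<Rightarrow> ('e \<Rightarrow> 'e) \<Rightarrow> 'e set \<Rightarrow> complex \<Rightarrow> ('e \<times> 'e) set" where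
  "Mgraph T g L D z = {(Gamma0 T g u, Gamma1 T g L u) | u. u \<in> kerAz T g D z}"

text \<open>Complex differentiability in operator norm (holomorphy of a
  Banach-space-valued function, equivalent to analyticity).\<close>
definition op_has_cderiv :: "(complex \<Rightarrow> 'e::complex_inner \<Rightarrow> 'e) \<Rightarrow> ('e \<Rightarrow> 'e) \<Rightarrow> complex \<Rightarrow> bool" where
  "op_has_cderiv B D z \<longleftrightarrow>
     ((\<lambda>w. onorm (\<lambda>x. B w x - B z x - (w - z) *\<^sub>C D x) / cmod (w - z)) \<longlongrightarrow> 0) (at z)"

definition analytic_op_function :: "complex set \<Rightarrow> (complex \<Rightarrow> 'e::complex_inner \<Rightarrow> 'e) \<Rightarrow> bool" where
  "analytic_op_function S B \<longleftrightarrow> open S \<and>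
     (\<forall>z\<in>S. bounded_clinear (B z) \<and> (\<exists>D. bounded_clinear D \<and> op_has_cderiv B D z))"

end

theory Submission
  imports Defs
begin

text \<open>
  For \<open>u = T f + \<gamma> \<phi>\<close> one has \<open>A u = f\<close> and \<open>\<Gamma>\<^sub>0 u = \<phi>\<close>, so \<open>u \<in> ker (A - \<lambda>)\<close> means
  \<open>f = \<lambda> (T f + \<gamma> \<phi>)\<close>, i.e. \<open>f = \<lambda> (I - \<lambda> T)\<^sup>-\<^sup>1 \<gamma> \<phi>\<close>. Hence
  \<open>M(\<lambda>) \<phi> = \<lambda> \<gamma>\<^sup>* (I - \<lambda> T)\<^sup>-\<^sup>1 \<gamma> \<phi> + \<Lambda> \<phi>\<close> on \<open>D(\<Lambda>)\<close>, and \<open>M(\<lambda>) - M(0) = \<lambda> \<gamma>\<^sup>* (I - \<lambda> T)\<^sup>-\<^sup>1 \<gamma>\<close>.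
  The resolvent identity for \<open>(I - \<lambda> T)\<^sup>-\<^sup>1\<close> shows that this function has a remainder of order
  \<open>|\<mu> - \<lambda>|\<^sup>2\<close> in operator norm, on the set of \<open>\<lambda>\<close> where \<open>I - \<lambda> T\<close> is boundedly invertible;
  that set is open by a perturbation argument based on Banach's fixed point theorem.
  The adjoint \<open>\<gamma>\<^sup>*\<close> comes from the Riesz representation theorem, proved by projecting onto the
  kernel of a bounded functional.
\<close>

section \<open>Complex inner product spaces\<close>

interpretation scaleC: vector_space "scaleC :: complex \<Rightarrow> 'a::complex_vector \<Rightarrow> 'a"
  by standard (simp_all add: scaleC_add_right scaleC_add_left scaleC_scaleC scaleC_one)

lemma cinner_add_right: "cinner x (y + z) = cinner x y + cinner (x::'a::complex_inner) z"
  by (metis cinner_add_left cinner_commute complex_cnj_add)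

lemma cinner_scaleC_right: "cinner x (c *\<^sub>C y) = c * cinner (x::'a::complex_inner) y"
  by (metis cinner_commute cinner_scaleC_left complex_cnj_cnj complex_cnj_mult)

lemma cinner_diff_left: "cinner (x - z) (y::'a::complex_inner) = cinner x y - cinner z y"
proof -
  interpret additive "\<lambda>x. cinner x y" by standard (rule cinner_add_left)
  show ?thesis by (rule diff)
qed

lemma cinner_diff_right: "cinner y (x - z::'a::complex_inner) = cinner y x - cinner y z"
proof -
  interpret additive "cinner y" by standard (rule cinner_add_right)
  show ?thesis by (rule diff)
qed

lemma cinner_zero_left [simp]: "cinner 0 (y::'a::complex_inner) = 0"
  using cinner_diff_left[of 0 0 y] by simp

lemma cinner_zero_right [simp]: "cinner y (0::'a::complex_inner) = 0"
  using cinner_diff_right[of y 0 0] by simp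

lemma cinner_self: "cinner x (x::'a::complex_inner) = complex_of_real ((norm x)\<^sup>2)"
proof -
  have "Im (cinner x x) = 0"
    using arg_cong[OF cinner_commute[of x x], of Im] by simp
  moreover have "(norm x)\<^sup>2 = Re (cinner x x)"
    using norm_eq_sqrt_cinner[of x] cinner_nonneg[of x] by simp
  ultimately show ?thesis by (simp add: complex_eq_iff)
qed

lemma norm_scaleC: "norm (c *\<^sub>C (x::'a::complex_inner)) = cmod c * norm x"
proof -
  have "complex_of_real ((norm (c *\<^sub>C x))\<^sup>2) = cnj c * (c * cinner x x)"
    by (simp only: cinner_self[symmetric] cinner_scaleC_left cinner_scaleC_right mult.left_commute)
  also have "\<dots> = complex_of_real ((cmod c * norm x)\<^sup>2)"
    by (simp add: cinner_self power_mult_distrib mult.assoc[symmetric])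
       (metis complex_norm_square mult.commute of_real_power)
  finally show ?thesis
    by (simp only: of_real_eq_iff) (simp add: power2_eq_iff_nonneg)
qed

lemma norm_diff_scaleC_power2:
  "(norm (x - t *\<^sub>C y))\<^sup>2 = (norm x)\<^sup>2 - 2 * Re (t * cinner x y) + (cmod t)\<^sup>2 * (norm (y::'a::complex_inner))\<^sup>2"
proof -
  have e: "cinner (x - t *\<^sub>C y) (x - t *\<^sub>C y)
      = cinner x x - t * cinner x y - cnj (t * cinner x y) + cnj t * t * cinner y y"
    by (simp add: cinner_diff_left cinner_diff_right cinner_scaleC_right cinner_scaleC_left
        algebra_simps cinner_commute[of y x])
  have "cnj t * t = complex_of_real ((cmod t)\<^sup>2)"
    by (metis complex_norm_square mult.commute of_real_power)
  moreover have "Re (t * cinner x y) + Re (cnj (t * cinner x y)) = 2 * Re (t * cinner x y)"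
    by simp
  ultimately show ?thesis
    using arg_cong[OF e, of Re] by (simp add: cinner_self)
qed

lemma norm_diff_projection_power2:
  assumes "(y::'a::complex_inner) \<noteq> 0"
  shows "(norm (x - (cinner y x / complex_of_real ((norm y)\<^sup>2)) *\<^sub>C y))\<^sup>2
       = (norm x)\<^sup>2 - (cmod (cinner x y))\<^sup>2 / (norm y)\<^sup>2"
proof -
  define t where "t = cinner y x / complex_of_real ((norm y)\<^sup>2)"
  have ny: "norm y > 0" using assms by simp
  have "t * cinner x y = complex_of_real ((cmod (cinner x y))\<^sup>2 / (norm y)\<^sup>2)"
    using ny complex_norm_square[of "cinner x y"]
    by (simp add: t_def cinner_commute[of y x] field_simps mult.commute)
  moreover have "cmod t = cmod (cinner x y) / (norm y)\<^sup>2"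
    by (simp add: t_def norm_divide norm_power) (metis cinner_commute complex_mod_cnj)
  ultimately have "(norm (x - t *\<^sub>C y))\<^sup>2
      = (norm x)\<^sup>2 - 2 * ((cmod (cinner x y))\<^sup>2 / (norm y)\<^sup>2)
        + (cmod (cinner x y) / (norm y)\<^sup>2)\<^sup>2 * (norm y)\<^sup>2"
    using norm_diff_scaleC_power2[of x t y] by simp
  moreover have "(cmod (cinner x y) / (norm y)\<^sup>2)\<^sup>2 * (norm y)\<^sup>2 = (cmod (cinner x y))\<^sup>2 / (norm y)\<^sup>2"
    using ny by (simp add: power2_eq_square)
  ultimately show ?thesis unfolding t_def by linarith
qed

lemma cmod_cinner_le: "cmod (cinner x y) \<le> norm x * norm (y::'a::complex_inner)"
proof (cases "y = 0")
  case False
  have "(cmod (cinner x y))\<^sup>2 / (norm y)\<^sup>2 \<le> (norm x)\<^sup>2"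
    using norm_diff_projection_power2[OF False, of x] by (smt (verit) zero_le_power2)
  hence "(cmod (cinner x y))\<^sup>2 \<le> (norm x * norm y)\<^sup>2"
    using False by (simp add: pos_divide_le_eq power_mult_distrib)
  thus ?thesis by (rule power2_le_imp_le) simp
qed simp

lemma parallelogram_law:
  "(norm (x + y))\<^sup>2 + (norm (x - y))\<^sup>2 = 2 * (norm x)\<^sup>2 + 2 * (norm (y::'a::complex_inner))\<^sup>2"
  using norm_diff_scaleC_power2[of x "-1" y] norm_diff_scaleC_power2[of x 1 y]
  by (simp add: scaleC_one)

lemma clinear_add: "clinear f \<Longrightarrow> f (x + y) = f x + f y"
  unfolding clinear_def by simp

lemma clinear_scaleC: "clinear f \<Longrightarrow> f (c *\<^sub>C x) = c *\<^sub>C f x"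
  unfolding clinear_def by simp

lemma clinear_additive: "clinear f \<Longrightarrow> Modules.additive f"
  unfolding clinear_def Modules.additive_def by simp

lemma clinear_diff: "clinear f \<Longrightarrow> f (x - y) = f x - f y"
  using clinear_additive additive.diff by blast

lemma clinear_zero: "clinear f \<Longrightarrow> f 0 = 0"
  using clinear_additive additive.zero by blast

lemma bounded_clinear_clinear: "bounded_clinear f \<Longrightarrow> clinear f"
  unfolding bounded_clinear_def by simp

lemma bounded_clinear_pos_bound:
  assumes "bounded_clinear f"
  obtains K where "K > 0" "\<And>x. norm (f x) \<le> norm x * K"
proof -
  obtain K where "\<forall>x. norm (f x) \<le> norm x * K"
    using assms unfolding bounded_clinear_def by blast
  hence "\<forall>x. norm (f x) \<le> norm x * max K 1"
    by (metis max.cobounded1 mult_left_mono norm_ge_zero order_trans)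
  thus ?thesis using that[of "max K 1"] by auto
qed

lemma bounded_clinear_compose:
  assumes f: "bounded_clinear f" and g: "bounded_clinear g"
  shows "bounded_clinear (\<lambda>x. f (g x))"
proof -
  obtain Kf where Kf: "Kf > 0" "\<And>x. norm (f x) \<le> norm x * Kf"
    using bounded_clinear_pos_bound[OF f] by blast
  obtain Kg where Kg: "\<And>x. norm (g x) \<le> norm x * Kg"
    using bounded_clinear_pos_bound[OF g] by blast
  have "norm (f (g x)) \<le> norm x * (Kg * Kf)" for x
  proof -
    have "norm (f (g x)) \<le> norm (g x) * Kf" by (rule Kf(2))
    also have "\<dots> \<le> norm x * Kg * Kf" using Kf(1) by (intro mult_right_mono Kg) auto
    finally show ?thesis by (simp add: mult_ac)
  qed
  moreover have "clinear (\<lambda>x. f (g x))"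
    using bounded_clinear_clinear[OF f] bounded_clinear_clinear[OF g]
    unfolding clinear_def by simp
  ultimately show ?thesis unfolding bounded_clinear_def by blast
qed

lemma bounded_clinear_scaleC:
  assumes f: "bounded_clinear f"
  shows "bounded_clinear (\<lambda>x. c *\<^sub>C f x)"
proof -
  obtain K where "\<And>x. norm (f x) \<le> norm x * K"
    using bounded_clinear_pos_bound[OF f] by blast
  hence "norm (c *\<^sub>C f x) \<le> norm x * (cmod c * K)" for x
    by (simp add: norm_scaleC) (metis mult.left_commute mult_left_mono norm_ge_zero)
  moreover have "clinear (\<lambda>x. c *\<^sub>C f x)"
    using bounded_clinear_clinear[OF f]
    unfolding clinear_def by (simp add: scaleC.scale_left_commute scaleC.scale_right_distrib)
  ultimately show ?thesis unfolding bounded_clinear_def by blast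
qed

section \<open>Riesz representation and adjoints\<close>

lemma closed_kernel_bounded_additive:
  fixes \<phi> :: "'a::real_normed_vector \<Rightarrow> complex"
  assumes "Modules.additive \<phi>" and bound: "\<And>x. cmod (\<phi> x) \<le> K * norm x"
  shows "closed {x. \<phi> x = 0}"
proof -
  interpret additive \<phi> by fact
  have "lipschitz_on (max K 0) UNIV \<phi>"
    unfolding lipschitz_on_def dist_norm
    by (metis bound diff max.cobounded1 max.cobounded2 mult_right_mono norm_ge_zero order_trans)
  hence "continuous_on UNIV \<phi>" by (rule lipschitz_on_continuous_on)
  thus ?thesis using continuous_closed_preimage_constant[of UNIV \<phi> 0] by simp
qed

lemma csubspace_scaleR: "csubspace N \<Longrightarrow> a \<in> N \<Longrightarrow> r *\<^sub>R a \<in> N"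
  unfolding csubspace_def by (simp add: scaleR_scaleC)

lemma minimizing_sequence_Cauchy:
  fixes x :: "'a::complex_inner"
  assumes N: "csubspace N" and ns: "\<And>k. ns k \<in> N" and d0: "0 \<le> d"
    and near: "\<And>k. norm (x - ns k) < d + inverse (real (Suc k))"
    and min: "\<And>n. n \<in> N \<Longrightarrow> d \<le> norm (x - n)"
  shows "Cauchy ns"
proof (rule CauchyI)
  define \<epsilon> where "\<epsilon> k = inverse (real (Suc k))" for k
  \<comment> \<open>The midpoint of \<open>ns j\<close> and \<open>ns k\<close> lies in \<open>N\<close>, so the parallelogram law forces them together.\<close>
  have close: "(norm (ns j - ns k))\<^sup>2 \<le> 2 * (d + \<epsilon> j)\<^sup>2 + 2 * (d + \<epsilon> k)\<^sup>2 - 4 * d\<^sup>2" for j k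
  proof -
    define a b where "a = x - ns j" and "b = x - ns k"
    have "(1/2) *\<^sub>R (ns j + ns k) \<in> N"
      using N ns unfolding csubspace_def by (simp add: csubspace_scaleR[OF N])
    moreover have "a + b = 2 *\<^sub>R (x - (1/2) *\<^sub>R (ns j + ns k))"
      unfolding a_def b_def by (simp add: algebra_simps scaleR_2)
    ultimately have "2 * d \<le> norm (a + b)" using min by fastforce
    hence "(2 * d)\<^sup>2 \<le> (norm (a + b))\<^sup>2" using d0 by (intro power_mono) auto
    moreover have "norm (ns j - ns k) = norm (a - b)"
      unfolding a_def b_def by (simp add: norm_minus_commute)
    moreover have "(norm a)\<^sup>2 \<le> (d + \<epsilon> j)\<^sup>2" "(norm b)\<^sup>2 \<le> (d + \<epsilon> k)\<^sup>2"
      unfolding a_def b_def \<epsilon>_def using near[of j] near[of k]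
      by (simp_all add: power_mono less_imp_le)
    ultimately show ?thesis using parallelogram_law[of a b] by (simp add: power_mult_distrib)
  qed
  fix e :: real assume e: "0 < e"
  obtain M :: nat where M: "inverse (real (Suc M)) < e\<^sup>2 / (4 * (2 * d + 1))"
    using reals_Archimedean[of "e\<^sup>2 / (4 * (2 * d + 1))"] e d0 by auto
  define q where "q = inverse (real (Suc M))"
  have q: "0 \<le> q" "q \<le> 1" unfolding q_def by (auto simp: inverse_le_1_iff)
  have \<epsilon>q: "\<epsilon> k \<le> q" "(d + \<epsilon> k)\<^sup>2 \<le> (d + q)\<^sup>2" if "k \<ge> M" for k
    using that d0 by (auto simp: \<epsilon>_def q_def le_imp_inverse_le intro!: power_mono)
  show "\<exists>M. \<forall>m\<ge>M. \<forall>n\<ge>M. norm (ns m - ns n) < e"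
  proof (intro exI allI impI)
    fix m n assume "M \<le> m" "M \<le> n"
    hence "(norm (ns m - ns n))\<^sup>2 \<le> 4 * (d + q)\<^sup>2 - 4 * d\<^sup>2"
      using close[of m n] \<epsilon>q[of m] \<epsilon>q[of n] by linarith
    also have "\<dots> = 4 * q * (2 * d + q)" by (simp add: power2_eq_square algebra_simps)
    also have "\<dots> \<le> 4 * q * (2 * d + 1)" using q d0 by (intro mult_left_mono) auto
    also have "\<dots> < e\<^sup>2" using M d0 unfolding q_def by (simp add: field_simps)
    finally show "norm (ns m - ns n) < e" using e by (simp add: power_less_imp_less_base)
  qed
qed

lemma closest_point_closed_csubspace:
  fixes x :: "'a::chilbert"
  assumes N: "csubspace N" "closed N"
  obtains n0 where "n0 \<in> N" "\<And>n. n \<in> N \<Longrightarrow> norm (x - n0) \<le> norm (x - n)"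
proof -
  define d where "d = (INF n\<in>N. norm (x - n))"
  have ne: "N \<noteq> {}" using N unfolding csubspace_def by blast
  have min: "d \<le> norm (x - n)" if "n \<in> N" for n
    unfolding d_def by (rule cINF_lower) (use that in \<open>auto intro: bdd_belowI2[of _ 0]\<close>)
  have "\<exists>n\<in>N. norm (x - n) < d + inverse (real (Suc k))" for k
    using cINF_less_iff[OF ne, of "\<lambda>n. norm (x - n)"] unfolding d_def
    by (metis bdd_belowI2 less_add_same_cancel1 norm_ge_zero inverse_positive_iff_positive
        of_nat_0_less_iff zero_less_Suc)
  then obtain ns where ns: "\<And>k. ns k \<in> N" "\<And>k. norm (x - ns k) < d + inverse (real (Suc k))"
    by metis
  have "0 \<le> d" unfolding d_def by (rule cINF_greatest[OF ne]) simp
  hence "Cauchy ns" using minimizing_sequence_Cauchy[OF N(1) ns(1) _ ns(2) min] by blast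
  then obtain n0 where lim: "ns \<longlonglongrightarrow> n0" using Cauchy_convergent convergent_def by blast
  have "n0 \<in> N" using closed_sequentially[OF N(2) ns(1) lim] .
  moreover have "norm (x - n0) \<le> d"
  proof (rule LIMSEQ_le)
    show "(\<lambda>k. norm (x - ns k)) \<longlonglongrightarrow> norm (x - n0)" by (intro tendsto_intros lim)
    show "(\<lambda>k. d + inverse (real (Suc k))) \<longlonglongrightarrow> d"
      using tendsto_add[OF tendsto_const LIMSEQ_inverse_real_of_nat, of d] by simp
    show "\<exists>N. \<forall>k\<ge>N. norm (x - ns k) \<le> d + inverse (real (Suc k))"
      using ns(2) less_imp_le by blast
  qed
  ultimately show ?thesis using that min by force
qed

lemma closest_point_orthogonal:
  fixes x :: "'a::complex_inner"
  assumes N: "csubspace N" and n0: "n0 \<in> N"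
    and closest: "\<And>n. n \<in> N \<Longrightarrow> norm (x - n0) \<le> norm (x - n)"
    and m: "m \<in> N"
  shows "cinner (x - n0) m = 0"
proof (cases "m = 0")
  case False
  define w where "w = x - n0"
  define t where "t = cinner m w / complex_of_real ((norm m)\<^sup>2)"
  have "n0 + t *\<^sub>C m \<in> N" using N n0 m unfolding csubspace_def by blast
  hence "norm w \<le> norm (w - t *\<^sub>C m)"
    using closest unfolding w_def by (metis diff_diff_eq)
  hence "(norm w)\<^sup>2 \<le> (norm (w - t *\<^sub>C m))\<^sup>2" by (intro power_mono) auto
  also have "\<dots> = (norm w)\<^sup>2 - (cmod (cinner w m))\<^sup>2 / (norm m)\<^sup>2"
    unfolding t_def by (rule norm_diff_projection_power2[OF False])
  finally have "(cmod (cinner w m))\<^sup>2 \<le> 0" using False by (simp add: divide_le_0_iff)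
  thus ?thesis unfolding w_def by simp
qed simp

text \<open>The representer is a multiple of a vector orthogonal to the closed kernel of \<open>\<phi>\<close>.\<close>

lemma riesz_representation:
  fixes \<phi> :: "'a::chilbert \<Rightarrow> complex"
  assumes add: "\<And>x y. \<phi> (x + y) = \<phi> x + \<phi> y"
    and scale: "\<And>c x. \<phi> (c *\<^sub>C x) = c * \<phi> x"
    and bound: "\<And>x. cmod (\<phi> x) \<le> K * norm x"
  shows "\<exists>y. \<forall>e. cinner y e = \<phi> e"
proof (cases "\<forall>x. \<phi> x = 0")
  case True thus ?thesis by (intro exI[of _ 0]) simp
next
  case False
  then obtain x0 where x0: "\<phi> x0 \<noteq> 0" by blast
  interpret additive \<phi> by standard (rule add)
  define N where "N = {x. \<phi> x = 0}"
  have N: "csubspace N" unfolding N_def csubspace_def by (simp add: add scale zero)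
  have "closed N"
    unfolding N_def by (rule closed_kernel_bounded_additive) (unfold_locales, fact bound)
  then obtain n0 where n0: "n0 \<in> N" "\<And>n. n \<in> N \<Longrightarrow> norm (x0 - n0) \<le> norm (x0 - n)"
    using closest_point_closed_csubspace[OF N] by blast
  define w where "w = x0 - n0"
  have orth: "cinner w m = 0" if "m \<in> N" for m
    unfolding w_def using closest_point_orthogonal[OF N n0 that] .
  have \<phi>w: "\<phi> w \<noteq> 0" using x0 n0(1) unfolding w_def N_def by (simp add: diff)
  hence "w \<noteq> 0" by (auto simp: zero)
  hence nw: "complex_of_real ((norm w)\<^sup>2) \<noteq> 0" by simp
  show ?thesis
  proof (intro exI[of _ "(cnj (\<phi> w) / complex_of_real ((norm w)\<^sup>2)) *\<^sub>C w"] allI)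
    fix e
    have "e - (\<phi> e / \<phi> w) *\<^sub>C w \<in> N" unfolding N_def using \<phi>w by (simp add: diff scale)
    hence "cinner w e - (\<phi> e / \<phi> w) * complex_of_real ((norm w)\<^sup>2) = 0"
      using orth[of "e - (\<phi> e / \<phi> w) *\<^sub>C w"]
      by (simp only: cinner_diff_right cinner_scaleC_right cinner_self)
    hence "cinner w e = (\<phi> e / \<phi> w) * complex_of_real ((norm w)\<^sup>2)" by simp
    thus "cinner ((cnj (\<phi> w) / complex_of_real ((norm w)\<^sup>2)) *\<^sub>C w) e = \<phi> e"
      using \<phi>w nw by (simp add: cinner_scaleC_left field_simps)
  qed
qed

lemma cinner_eq_imp_eq: "(\<And>e. cinner y e = cinner y' (e::'a::complex_inner)) \<Longrightarrow> y = y'"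
  by (metis cinner_diff_left cinner_eq_zero_iff eq_iff_diff_eq_0)

lemma cinner_adjoint_op:
  assumes g: "bounded_clinear (g :: 'e::chilbert \<Rightarrow> 'h::complex_inner)"
  shows "cinner (adjoint_op g f) e = cinner f (g e)"
proof -
  obtain K where K: "\<And>x. norm (g x) \<le> norm x * K" using bounded_clinear_pos_bound[OF g] by blast
  have "\<exists>y. \<forall>e. cinner y e = cinner f (g e)"
  proof (rule riesz_representation[where K = "norm f * K"])
    show "cinner f (g (x + y)) = cinner f (g x) + cinner f (g y)" for x y
      by (simp add: clinear_add[OF bounded_clinear_clinear[OF g]] cinner_add_right)
    show "cinner f (g (c *\<^sub>C x)) = c * cinner f (g x)" for c x
      by (simp add: clinear_scaleC[OF bounded_clinear_clinear[OF g]] cinner_scaleC_right)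
    show "cmod (cinner f (g x)) \<le> norm f * K * norm x" for x
      using cmod_cinner_le[of f "g x"] mult_left_mono[OF K[of x], of "norm f"]
      by (simp add: mult_ac)
  qed
  then obtain y where y: "\<forall>e. cinner y e = cinner f (g e)" by blast
  have "\<forall>e. cinner (adjoint_op g f) e = cinner f (g e)"
    unfolding adjoint_op_def
  proof (rule theI[of _ y])
    show "y' = y" if "\<forall>e. cinner y' e = cinner f (g e)" for y'
      using that y by (intro cinner_eq_imp_eq) simp
  qed (rule y)
  thus ?thesis by blast
qed

lemma adjoint_op_eqI:
  assumes "bounded_clinear (g :: 'e::chilbert \<Rightarrow> 'h::complex_inner)"
    and "\<And>e. cinner y e = cinner f (g e)"
  shows "adjoint_op g f = y"
  using assms by (intro cinner_eq_imp_eq) (simp add: cinner_adjoint_op)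

lemma bounded_clinear_adjoint_op:
  assumes g: "bounded_clinear (g :: 'e::chilbert \<Rightarrow> 'h::complex_inner)"
  shows "bounded_clinear (adjoint_op g)"
proof -
  obtain K where K: "K > 0" "\<And>x. norm (g x) \<le> norm x * K"
    using bounded_clinear_pos_bound[OF g] by blast
  have "adjoint_op g (a + b) = adjoint_op g a + adjoint_op g b" for a b
    by (rule adjoint_op_eqI[OF g]) (simp add: cinner_add_left cinner_adjoint_op[OF g])
  moreover have "adjoint_op g (c *\<^sub>C a) = c *\<^sub>C adjoint_op g a" for c a
    by (rule adjoint_op_eqI[OF g]) (simp add: cinner_scaleC_left cinner_adjoint_op[OF g])
  ultimately have "clinear (adjoint_op g)" unfolding clinear_def by blast
  moreover have "norm (adjoint_op g f) \<le> norm f * K" for f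
  proof -
    let ?a = "adjoint_op g f"
    have "norm ?a * norm ?a = Re (cinner f (g ?a))"
      by (simp add: cinner_adjoint_op[OF g, symmetric] cinner_self power2_eq_square)
    also have "\<dots> \<le> norm f * norm (g ?a)"
      using complex_Re_le_cmod order_trans cmod_cinner_le by blast
    also have "\<dots> \<le> (norm f * K) * norm ?a"
      using mult_left_mono[OF K(2)[of ?a], of "norm f"] by (simp add: mult_ac)
    finally show ?thesis
      using K(1) by (cases "?a = 0") simp_all
  qed
  ultimately show ?thesis unfolding bounded_clinear_def by blast
qed

section \<open>The inverse of \<open>I - z T\<close>\<close>

lemma boundedly_invertibleI:
  assumes F: "clinear F"
    and below: "\<And>x. norm x \<le> norm (F x) * C"
    and surj: "\<And>y. \<exists>x. F x = y"
  shows "boundedly_invertible F"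
proof -
  have inj: "a = b" if "F a = F b" for a b
    using below[of "a - b"] that by (simp add: clinear_diff[OF F])
  define S where "S y = (SOME x. F x = y)" for y
  have FS: "F (S y) = y" for y unfolding S_def using someI_ex[OF surj] .
  have "S (a + b) = S a + S b" for a b by (rule inj) (simp add: FS clinear_add[OF F])
  moreover have "S (c *\<^sub>C a) = c *\<^sub>C S a" for c a by (rule inj) (simp add: FS clinear_scaleC[OF F])
  ultimately have "clinear S" unfolding clinear_def by blast
  moreover have "norm (S y) \<le> norm y * C" for y using below[of "S y"] by (simp add: FS)
  ultimately have "bounded_clinear S" unfolding bounded_clinear_def by blast
  thus ?thesis unfolding boundedly_invertible_def using FS inj by blast
qed

text \<open>\<open>(I - z T)\<^sup>-\<^sup>1\<close>; an arbitrary operator when \<open>I - z T\<close> is not boundedly invertible.\<close>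

definition pencil_inv :: "('h::complex_inner \<Rightarrow> 'h) \<Rightarrow> complex \<Rightarrow> 'h \<Rightarrow> 'h" where
  "pencil_inv T z = (SOME S. bounded_clinear S \<and> (\<forall>x. S (x - z *\<^sub>C T x) = x) \<and> (\<forall>x. S x - z *\<^sub>C T (S x) = x))"

lemma pencil_inv_inverse:
  assumes "boundedly_invertible (\<lambda>x. x - z *\<^sub>C T x)"
  shows "bounded_clinear (pencil_inv T z)"
    and "pencil_inv T z (x - z *\<^sub>C T x) = x"
    and "pencil_inv T z y - z *\<^sub>C T (pencil_inv T z y) = y"
proof -
  have "\<exists>S. bounded_clinear S \<and> (\<forall>x. S (x - z *\<^sub>C T x) = x) \<and> (\<forall>x. S x - z *\<^sub>C T (S x) = x)"
    using assms unfolding boundedly_invertible_def by simp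
  from someI_ex[OF this] show "bounded_clinear (pencil_inv T z)"
    "pencil_inv T z (x - z *\<^sub>C T x) = x" "pencil_inv T z y - z *\<^sub>C T (pencil_inv T z y) = y"
    unfolding pencil_inv_def by blast+
qed

lemma pencil_lower_bound_near:
  assumes inv: "boundedly_invertible (\<lambda>x. x - z *\<^sub>C T x)"
    and Ks0: "0 \<le> Ks" and Ks: "\<And>x. norm (pencil_inv T z x) \<le> norm x * Ks"
    and KT: "\<And>x. norm (T x) \<le> norm x * KT"
    and small: "cmod (w - z) * Ks * KT \<le> 1/2"
  shows "norm x \<le> norm (x - w *\<^sub>C T x) * (2 * Ks)"
proof -
  have "x = pencil_inv T z ((x - w *\<^sub>C T x) + (w - z) *\<^sub>C T x)"
    using pencil_inv_inverse(2)[OF inv, of x] by (simp add: algebra_simps)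
  hence "norm x \<le> norm ((x - w *\<^sub>C T x) + (w - z) *\<^sub>C T x) * Ks"
    using Ks by (rule ssubst)
  also have "\<dots> \<le> (norm (x - w *\<^sub>C T x) + cmod (w - z) * (norm x * KT)) * Ks"
    using Ks0 norm_triangle_ineq[of "x - w *\<^sub>C T x" "(w - z) *\<^sub>C T x"]
      mult_left_mono[OF KT[of x], of "cmod (w - z)"]
    by (intro mult_right_mono) (auto simp: norm_scaleC)
  also have "\<dots> = Ks * norm (x - w *\<^sub>C T x) + (cmod (w - z) * Ks * KT) * norm x"
    by (simp add: algebra_simps)
  also have "\<dots> \<le> Ks * norm (x - w *\<^sub>C T x) + (1/2) * norm x"
    using small by (intro add_left_mono mult_right_mono) auto
  finally show ?thesis by (simp add: algebra_simps)
qed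

text \<open>\<open>x - w T x = y\<close> is the fixed point equation of the contraction
  \<open>x \<mapsto> (I - z T)\<^sup>-\<^sup>1 (y + (w - z) T x)\<close>.\<close>

lemma pencil_surj_near:
  fixes T :: "'h::chilbert \<Rightarrow> 'h"
  assumes T: "clinear T" and inv: "boundedly_invertible (\<lambda>x. x - z *\<^sub>C T x)"
    and Ks0: "0 \<le> Ks" and Ks: "\<And>x. norm (pencil_inv T z x) \<le> norm x * Ks"
    and KT0: "0 \<le> KT" and KT: "\<And>x. norm (T x) \<le> norm x * KT"
    and small: "cmod (w - z) * Ks * KT < 1"
  shows "\<exists>x. x - w *\<^sub>C T x = y"
proof -
  define q where "q = cmod (w - z) * Ks * KT"
  define f where "f x = pencil_inv T z (y + (w - z) *\<^sub>C T x)" for x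
  have S: "clinear (pencil_inv T z)" using pencil_inv_inverse(1)[OF inv] by (rule bounded_clinear_clinear)
  have "\<exists>!x. f x = x"
  proof (rule banach_fix_type)
    show "0 \<le> q" unfolding q_def using Ks0 KT0 by simp
    show "q < 1" using small unfolding q_def .
    show "\<forall>a b. dist (f a) (f b) \<le> q * dist a b"
    proof (intro allI)
      fix a b
      have "f a - f b = pencil_inv T z ((w - z) *\<^sub>C T (a - b))"
        unfolding f_def by (simp add: clinear_diff[OF S, symmetric] clinear_diff[OF T] algebra_simps)
      hence "norm (f a - f b) \<le> norm ((w - z) *\<^sub>C T (a - b)) * Ks"
        using Ks by (rule ssubst)
      also have "\<dots> \<le> cmod (w - z) * (norm (a - b) * KT) * Ks"
        unfolding norm_scaleC using Ks0 KT[of "a - b"] by (intro mult_right_mono mult_left_mono) auto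
      finally show "dist (f a) (f b) \<le> q * dist a b"
        by (simp add: dist_norm q_def mult_ac)
    qed
  qed
  then obtain x where "f x = x" by blast
  hence "x - z *\<^sub>C T x = y + (w - z) *\<^sub>C T x"
    using pencil_inv_inverse(3)[OF inv, of "y + (w - z) *\<^sub>C T x"] unfolding f_def by simp
  hence "x - w *\<^sub>C T x = y" by (simp add: algebra_simps)
  thus ?thesis by blast
qed

lemma pencil_invertible_near:
  fixes T :: "'h::chilbert \<Rightarrow> 'h"
  assumes bT: "bounded_clinear T" and inv: "boundedly_invertible (\<lambda>x. x - z *\<^sub>C T x)"
  obtains \<delta> C where "\<delta> > 0"
    and "\<And>w. cmod (w - z) < \<delta> \<Longrightarrow> boundedly_invertible (\<lambda>x. x - w *\<^sub>C T x)"
    and "C > 0"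
    and "\<And>w y. cmod (w - z) < \<delta> \<Longrightarrow> norm (pencil_inv T w y) \<le> norm y * C"
proof -
  have T: "clinear T" using bT by (rule bounded_clinear_clinear)
  obtain Ks where Ks: "Ks > 0" "\<And>x. norm (pencil_inv T z x) \<le> norm x * Ks"
    using bounded_clinear_pos_bound[OF pencil_inv_inverse(1)[OF inv]] by blast
  obtain KT where KT: "KT > 0" "\<And>x. norm (T x) \<le> norm x * KT"
    using bounded_clinear_pos_bound[OF bT] by blast
  define \<delta> where "\<delta> = 1 / (2 * Ks * KT)"
  have small: "cmod (w - z) * Ks * KT \<le> 1/2" if "cmod (w - z) < \<delta>" for w
    using that Ks(1) KT(1) by (simp add: \<delta>_def field_simps)
  note below = pencil_lower_bound_near[OF inv less_imp_le[OF Ks(1)] Ks(2) KT(2) small]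
  have invw: "boundedly_invertible (\<lambda>x. x - w *\<^sub>C T x)" if w: "cmod (w - z) < \<delta>" for w
  proof (rule boundedly_invertibleI)
    show "clinear (\<lambda>x. x - w *\<^sub>C T x)"
      unfolding clinear_def
      by (simp add: clinear_add[OF T] clinear_scaleC[OF T] algebra_simps scaleC.scale_left_commute)
    show "norm x \<le> norm (x - w *\<^sub>C T x) * (2 * Ks)" for x by (rule below[OF w])
    show "\<exists>x. x - w *\<^sub>C T x = y" for y
      using pencil_surj_near[OF T inv less_imp_le[OF Ks(1)] Ks(2) less_imp_le[OF KT(1)] KT(2)]
        small[OF w] by simp
  qed
  show ?thesis
  proof (rule that)
    show "\<delta> > 0" unfolding \<delta>_def using Ks KT by simp
    show "2 * Ks > 0" using Ks(1) by simp
    show "norm (pencil_inv T w y) \<le> norm y * (2 * Ks)" if "cmod (w - z) < \<delta>" for w y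
      using below[OF that, of "pencil_inv T w y"] pencil_inv_inverse(3)[OF invw[OF that]] by simp
  qed (rule invw)
qed

lemma open_pencil_invertible:
  fixes T :: "'h::chilbert \<Rightarrow> 'h"
  assumes "bounded_clinear T"
  shows "open {z. boundedly_invertible (\<lambda>x. x - z *\<^sub>C T x)}"
  unfolding open_contains_ball
proof (intro ballI)
  fix z assume "z \<in> {z. boundedly_invertible (\<lambda>x. x - z *\<^sub>C T x)}"
  hence inv: "boundedly_invertible (\<lambda>x. x - z *\<^sub>C T x)" by simp
  obtain \<delta> C where \<delta>: "\<delta> > 0" "\<And>w. cmod (w - z) < \<delta> \<Longrightarrow> boundedly_invertible (\<lambda>x. x - w *\<^sub>C T x)"
    and "C > 0" "\<And>w y. cmod (w - z) < \<delta> \<Longrightarrow> norm (pencil_inv T w y) \<le> norm y * C"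
    by (rule pencil_invertible_near[OF assms inv]) blast
  have "ball z \<delta> \<subseteq> {z. boundedly_invertible (\<lambda>x. x - z *\<^sub>C T x)}"
  proof
    fix w assume "w \<in> ball z \<delta>"
    hence "cmod (w - z) < \<delta>" by (simp add: dist_norm norm_minus_commute)
    thus "w \<in> {z. boundedly_invertible (\<lambda>x. x - z *\<^sub>C T x)}" using \<delta>(2) by simp
  qed
  thus "\<exists>e>0. ball z e \<subseteq> {z. boundedly_invertible (\<lambda>x. x - z *\<^sub>C T x)}" using \<delta>(1) by blast
qed

lemma pencil_inv_diff:
  assumes T: "clinear T"
    and iz: "boundedly_invertible (\<lambda>x. x - z *\<^sub>C T x)"
    and iw: "boundedly_invertible (\<lambda>x. x - w *\<^sub>C T x)"
  shows "pencil_inv T w y - pencil_inv T z y = (w - z) *\<^sub>C pencil_inv T w (T (pencil_inv T z y))"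
proof -
  have W: "clinear (pencil_inv T w)" using pencil_inv_inverse(1)[OF iw] by (rule bounded_clinear_clinear)
  define a where "a = pencil_inv T z y"
  have "y = (a - w *\<^sub>C T a) + (w - z) *\<^sub>C T a"
    using pencil_inv_inverse(3)[OF iz, of y] unfolding a_def by (simp add: algebra_simps)
  hence "pencil_inv T w y = a + (w - z) *\<^sub>C pencil_inv T w (T a)"
    by (simp add: clinear_add[OF W] clinear_scaleC[OF W] pencil_inv_inverse(2)[OF iw])
  thus ?thesis unfolding a_def by simp
qed

lemma scaled_pencil_inv_diff:
  assumes T: "clinear T"
    and iz: "boundedly_invertible (\<lambda>x. x - z *\<^sub>C T x)"
    and iw: "boundedly_invertible (\<lambda>x. x - w *\<^sub>C T x)"
  shows "w *\<^sub>C pencil_inv T w y - z *\<^sub>C pencil_inv T z y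
       = (w - z) *\<^sub>C pencil_inv T w (pencil_inv T z y)"
proof -
  have W: "clinear (pencil_inv T w)" using pencil_inv_inverse(1)[OF iw] by (rule bounded_clinear_clinear)
  define a where "a = pencil_inv T z y"
  have "a = (a - w *\<^sub>C T a) + w *\<^sub>C T a" by simp
  hence Ra: "pencil_inv T w a = a + w *\<^sub>C pencil_inv T w (T a)"
    by (metis clinear_add[OF W] clinear_scaleC[OF W] pencil_inv_inverse(2)[OF iw])
  have Ry: "pencil_inv T w y = a + (w - z) *\<^sub>C pencil_inv T w (T a)"
    using pencil_inv_diff[OF T iz iw, of y] unfolding a_def by (simp add: algebra_simps)
  show ?thesis unfolding a_def[symmetric] Ra Ry by (simp add: algebra_simps)
qed

lemma scaled_pencil_inv_second_diff:
  assumes T: "clinear T"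
    and iz: "boundedly_invertible (\<lambda>x. x - z *\<^sub>C T x)"
    and iw: "boundedly_invertible (\<lambda>x. x - w *\<^sub>C T x)"
  shows "w *\<^sub>C pencil_inv T w y - z *\<^sub>C pencil_inv T z y - (w - z) *\<^sub>C pencil_inv T z (pencil_inv T z y)
       = (w - z) *\<^sub>C ((w - z) *\<^sub>C pencil_inv T w (T (pencil_inv T z (pencil_inv T z y))))"
proof -
  have "w *\<^sub>C pencil_inv T w y - z *\<^sub>C pencil_inv T z y - (w - z) *\<^sub>C pencil_inv T z (pencil_inv T z y)
      = (w - z) *\<^sub>C (pencil_inv T w (pencil_inv T z y) - pencil_inv T z (pencil_inv T z y))"
    by (simp add: scaled_pencil_inv_diff[OF T iz iw] scaleC.scale_right_diff_distrib)
  thus ?thesis by (simp only: pencil_inv_diff[OF T iz iw])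
qed

section \<open>Analyticity\<close>

lemma onorm_nonneg_of_bound:
  assumes "\<And>x. norm (f x) \<le> b * norm x"
  shows "0 \<le> onorm f"
  unfolding onorm_def
proof (rule cSUP_upper2[where x = 0])
  show "bdd_above (range (\<lambda>x. norm (f x) / norm x))"
  proof (rule bdd_aboveI2[where M = "max b 0"])
    fix x
    have "norm (f x) \<le> max b 0 * norm x"
      by (rule order_trans[OF assms mult_right_mono]) auto
    thus "norm (f x) / norm x \<le> max b 0"
      by (cases "x = 0") (simp_all add: pos_divide_le_eq)
  qed
qed auto

lemma op_has_cderiv_quadratic_remainder:
  assumes "\<delta> > 0" and "0 \<le> M"
    and remainder: "\<And>w x. w \<noteq> z \<Longrightarrow> cmod (w - z) < \<delta> \<Longrightarrow>
      norm (B w x - B z x - (w - z) *\<^sub>C D x) \<le> (cmod (w - z))\<^sup>2 * M * norm x"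
  shows "op_has_cderiv B D z"
  unfolding op_has_cderiv_def
proof (rule Lim_null_comparison)
  have "norm (onorm (\<lambda>x. B w x - B z x - (w - z) *\<^sub>C D x) / cmod (w - z)) \<le> M * cmod (w - z)"
    if w: "w \<noteq> z" "cmod (w - z) < \<delta>" for w
  proof -
    have "onorm (\<lambda>x. B w x - B z x - (w - z) *\<^sub>C D x) \<le> (cmod (w - z))\<^sup>2 * M"
      using remainder[OF w] \<open>0 \<le> M\<close> by (intro onorm_bound) auto
    moreover have "0 \<le> onorm (\<lambda>x. B w x - B z x - (w - z) *\<^sub>C D x)"
      using remainder[OF w] by (rule onorm_nonneg_of_bound)
    moreover have "cmod (w - z) > 0" using w(1) by simp
    ultimately show ?thesis by (simp add: divide_le_eq power2_eq_square mult_ac)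
  qed
  thus "\<forall>\<^sub>F w in at z. norm (onorm (\<lambda>x. B w x - B z x - (w - z) *\<^sub>C D x) / cmod (w - z))
      \<le> M * cmod (w - z)"
    unfolding eventually_at using \<open>\<delta> > 0\<close> by (auto simp: dist_norm)
  show "((\<lambda>w. M * cmod (w - z)) \<longlongrightarrow> 0) (at z)"
    by (auto intro!: tendsto_eq_intros)
qed

lemma scaled_pencil_inv_quadratic_remainder:
  fixes T :: "'h::chilbert \<Rightarrow> 'h" and A :: "'h \<Rightarrow> 'e::complex_inner" and G :: "'e \<Rightarrow> 'h"
  assumes bT: "bounded_clinear T" and bA: "bounded_clinear A" and bG: "bounded_clinear G"
    and iz: "boundedly_invertible (\<lambda>x. x - z *\<^sub>C T x)"
  obtains \<delta> M where "\<delta> > 0" and "0 \<le> M"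
    and "\<And>w x. cmod (w - z) < \<delta> \<Longrightarrow>
      norm (A (w *\<^sub>C pencil_inv T w (G x)) - A (z *\<^sub>C pencil_inv T z (G x))
            - (w - z) *\<^sub>C A (pencil_inv T z (pencil_inv T z (G x))))
      \<le> (cmod (w - z))\<^sup>2 * M * norm x"
proof -
  have T: "clinear T" using bT by (rule bounded_clinear_clinear)
  have lA: "clinear A" using bA by (rule bounded_clinear_clinear)
  obtain KA where KA: "KA > 0" "\<And>x. norm (A x) \<le> norm x * KA"
    using bounded_clinear_pos_bound[OF bA] by blast
  obtain KG where KG: "KG > 0" "\<And>x. norm (G x) \<le> norm x * KG"
    using bounded_clinear_pos_bound[OF bG] by blast
  obtain KT where KT: "KT > 0" "\<And>x. norm (T x) \<le> norm x * KT"
    using bounded_clinear_pos_bound[OF bT] by blast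
  obtain Ks where Ks: "Ks > 0" "\<And>x. norm (pencil_inv T z x) \<le> norm x * Ks"
    using bounded_clinear_pos_bound[OF pencil_inv_inverse(1)[OF iz]] by blast
  obtain \<delta> C where \<delta>: "\<delta> > 0"
    "\<And>w. cmod (w - z) < \<delta> \<Longrightarrow> boundedly_invertible (\<lambda>x. x - w *\<^sub>C T x)" "C > 0"
    "\<And>w y. cmod (w - z) < \<delta> \<Longrightarrow> norm (pencil_inv T w y) \<le> norm y * C"
    by (rule pencil_invertible_near[OF bT iz]) blast
  show ?thesis
  proof (rule that[of \<delta> "KG * Ks * Ks * KT * C * KA"])
    fix w x assume w: "cmod (w - z) < \<delta>"
    define h where "h = pencil_inv T z (pencil_inv T z (G x))"
    have "A (w *\<^sub>C pencil_inv T w (G x)) - A (z *\<^sub>C pencil_inv T z (G x)) - (w - z) *\<^sub>C A h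
        = A ((w - z) *\<^sub>C ((w - z) *\<^sub>C pencil_inv T w (T h)))"
      unfolding h_def
      by (simp add: clinear_diff[OF lA, symmetric] clinear_scaleC[OF lA, symmetric]
          scaled_pencil_inv_second_diff[OF T iz \<delta>(2)[OF w]])
    also have "norm \<dots> \<le> (cmod (w - z))\<^sup>2 * norm (pencil_inv T w (T h)) * KA"
      by (rule order_trans[OF KA(2)]) (simp add: norm_scaleC norm_mult power2_eq_square mult_ac)
    also have "\<dots> \<le> (cmod (w - z))\<^sup>2 * (norm x * KG * Ks * Ks * KT * C) * KA"
    proof -
      have "norm (pencil_inv T w (T h)) \<le> norm (T h) * C" by (rule \<delta>(4)[OF w])
      also have "\<dots> \<le> norm h * KT * C" using \<delta>(3) KT(2) by (simp add: mult_right_mono)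
      also have "\<dots> \<le> norm (pencil_inv T z (G x)) * Ks * KT * C"
        unfolding h_def using \<delta>(3) KT(1) Ks(2) by (simp add: mult_right_mono)
      also have "\<dots> \<le> norm (G x) * Ks * Ks * KT * C"
        using \<delta>(3) KT(1) Ks by (simp add: mult_right_mono)
      also have "\<dots> \<le> norm x * KG * Ks * Ks * KT * C"
        using \<delta>(3) KT(1) Ks(1) KG(2) by (simp add: mult_right_mono)
      finally show ?thesis using KA(1) by (simp add: mult_left_mono mult_right_mono)
    qed
    finally show "norm (A (w *\<^sub>C pencil_inv T w (G x)) - A (z *\<^sub>C pencil_inv T z (G x))
        - (w - z) *\<^sub>C A (pencil_inv T z (pencil_inv T z (G x))))
        \<le> (cmod (w - z))\<^sup>2 * (KG * Ks * Ks * KT * C * KA) * norm x"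
      by (simp add: h_def mult_ac)
  qed (use \<delta> KA KG KT Ks in auto)
qed

lemma analytic_op_function_scaled_pencil_inv:
  fixes T :: "'h::chilbert \<Rightarrow> 'h" and A :: "'h \<Rightarrow> 'e::complex_inner" and G :: "'e \<Rightarrow> 'h"
  assumes bT: "bounded_clinear T" and bA: "bounded_clinear A" and bG: "bounded_clinear G"
  shows "analytic_op_function {z. boundedly_invertible (\<lambda>x. x - z *\<^sub>C T x)}
           (\<lambda>z x. A (z *\<^sub>C pencil_inv T z (G x)))"
  unfolding analytic_op_function_def
proof (intro conjI ballI open_pencil_invertible[OF bT])
  fix z assume "z \<in> {z. boundedly_invertible (\<lambda>x. x - z *\<^sub>C T x)}"
  hence iz: "boundedly_invertible (\<lambda>x. x - z *\<^sub>C T x)" by simp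
  note bR = pencil_inv_inverse(1)[OF iz]
  show "bounded_clinear (\<lambda>x. A (z *\<^sub>C pencil_inv T z (G x)))"
    by (intro bounded_clinear_compose[OF bA] bounded_clinear_scaleC bounded_clinear_compose[OF bR bG])
  have "bounded_clinear (\<lambda>x. A (pencil_inv T z (pencil_inv T z (G x))))"
    by (intro bounded_clinear_compose[OF bA] bounded_clinear_compose[OF bR] bG)
  moreover obtain \<delta> M where "\<delta> > 0" "0 \<le> M"
    and "\<And>w x. cmod (w - z) < \<delta> \<Longrightarrow>
      norm (A (w *\<^sub>C pencil_inv T w (G x)) - A (z *\<^sub>C pencil_inv T z (G x))
            - (w - z) *\<^sub>C A (pencil_inv T z (pencil_inv T z (G x))))
      \<le> (cmod (w - z))\<^sup>2 * M * norm x"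
    by (rule scaled_pencil_inv_quadratic_remainder[OF bT bA bG iz]) blast
  hence "op_has_cderiv (\<lambda>z x. A (z *\<^sub>C pencil_inv T z (G x)))
           (\<lambda>x. A (pencil_inv T z (pencil_inv T z (G x)))) z"
    by (intro op_has_cderiv_quadratic_remainder) auto
  ultimately show "\<exists>D. bounded_clinear D \<and> op_has_cderiv (\<lambda>z x. A (z *\<^sub>C pencil_inv T z (G x))) D z"
    by blast
qed

section \<open>The Weyl function\<close>

lemma boundedly_invertible_pencil_0: "boundedly_invertible (\<lambda>x. x - 0 *\<^sub>C T x)"
proof -
  have "bounded_clinear (\<lambda>x::'a. x)"
    unfolding bounded_clinear_def clinear_def by (auto intro: exI[of _ 1])
  thus ?thesis unfolding boundedly_invertible_def by (intro exI[of _ "\<lambda>x. x"]) simp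
qed

lemma pencil_eigen_iff:
  assumes T: "clinear T" and inv: "boundedly_invertible (\<lambda>x. x - z *\<^sub>C T x)"
  shows "f = z *\<^sub>C (T f + y) \<longleftrightarrow> f = z *\<^sub>C pencil_inv T z y"
proof -
  have R: "clinear (pencil_inv T z)" using pencil_inv_inverse(1)[OF inv] by (rule bounded_clinear_clinear)
  have "f = z *\<^sub>C (T f + y) \<longleftrightarrow> f - z *\<^sub>C T f = z *\<^sub>C y"
    by (metis diff_eq_eq scaleC.scale_right_distrib add.commute)
  also have "\<dots> \<longleftrightarrow> f = pencil_inv T z (z *\<^sub>C y)"
    using pencil_inv_inverse(2,3)[OF inv] by metis
  finally show ?thesis by (simp add: clinear_scaleC[OF R])
qed

locale range_decomposition =
  fixes T :: "'h::chilbert \<Rightarrow> 'h" and \<gamma> :: "'e::chilbert \<Rightarrow> 'h"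
  assumes bounded_T: "bounded_clinear T" and ker_T: "{f. T f = 0} = {0}"
    and bounded_\<gamma>: "bounded_clinear \<gamma>" and ker_\<gamma>: "{\<phi>. \<gamma> \<phi> = 0} = {0}"
    and ranges_disjoint: "range T \<inter> range \<gamma> = {0}"
begin

lemma decomposition_unique:
  assumes "T f + \<gamma> \<phi> = T f' + \<gamma> \<phi>'"
  shows "f = f'" and "\<phi> = \<phi>'"
proof -
  have T: "clinear T" and g: "clinear \<gamma>"
    using bounded_T bounded_\<gamma> by (auto intro: bounded_clinear_clinear)
  have "T (f - f') = \<gamma> (\<phi>' - \<phi>)"
    using assms by (simp add: clinear_diff[OF T] clinear_diff[OF g] algebra_simps)
  moreover from this have "T (f - f') = 0" using ranges_disjoint by (metis IntI rangeI singletonD)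
  ultimately have "f - f' \<in> {f. T f = 0}" "\<phi>' - \<phi> \<in> {\<phi>. \<gamma> \<phi> = 0}" by simp_all
  thus "f = f'" "\<phi> = \<phi>'" unfolding ker_T ker_\<gamma> by simp_all
qed

lemma opA_eq [simp]: "opA T \<gamma> (T f + \<gamma> \<phi>) = f"
  unfolding opA_def by (rule the_equality) (blast, metis decomposition_unique(1))

lemma Gamma0_eq [simp]: "Gamma0 T \<gamma> (T f + \<gamma> \<phi>) = \<phi>"
  unfolding Gamma0_def by (rule the_equality) (blast, metis decomposition_unique(2))

lemma kerAz_pencil_inv:
  assumes inv: "boundedly_invertible (\<lambda>x. x - z *\<^sub>C T x)"
  shows "kerAz T \<gamma> D z = (\<lambda>\<phi>. T (z *\<^sub>C pencil_inv T z (\<gamma> \<phi>)) + \<gamma> \<phi>) ` D"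
proof -
  have T: "clinear T" using bounded_T by (rule bounded_clinear_clinear)
  have "kerAz T \<gamma> D z = (\<lambda>(f, \<phi>). T f + \<gamma> \<phi>) ` {(f, \<phi>). \<phi> \<in> D \<and> f = z *\<^sub>C (T f + \<gamma> \<phi>)}"
    unfolding kerAz_def domGamma1_def by auto
  also have "{(f, \<phi>). \<phi> \<in> D \<and> f = z *\<^sub>C (T f + \<gamma> \<phi>)} = (\<lambda>\<phi>. (z *\<^sub>C pencil_inv T z (\<gamma> \<phi>), \<phi>)) ` D"
    by (auto simp: pencil_eigen_iff[OF T inv])
  finally show ?thesis by (simp add: image_image)
qed

lemma Mgraph_pencil_inv:
  assumes inv: "boundedly_invertible (\<lambda>x. x - z *\<^sub>C T x)"
  shows "Mgraph T \<gamma> \<Lambda> D z = (\<lambda>\<phi>. (\<phi>, adjoint_op \<gamma> (z *\<^sub>C pencil_inv T z (\<gamma> \<phi>)) + \<Lambda> \<phi>)) ` D"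
proof -
  have "Mgraph T \<gamma> \<Lambda> D z = (\<lambda>u. (Gamma0 T \<gamma> u, Gamma1 T \<gamma> \<Lambda> u)) ` kerAz T \<gamma> D z"
    unfolding Mgraph_def by blast
  thus ?thesis by (simp add: kerAz_pencil_inv[OF inv] image_image Gamma1_def)
qed

end

theorem corollary1:
  fixes T :: "'h::chilbert \<Rightarrow> 'h"
    and \<gamma> :: "'e::chilbert \<Rightarrow> 'h"
    and \<Lambda> :: "'e \<Rightarrow> 'e"
    and D\<Lambda> :: "'e set"
  assumes "bounded_clinear T"
    and "{f. T f = 0} = {0}"
    and "bounded_clinear \<gamma>"
    and "{\<phi>. \<gamma> \<phi> = 0} = {0}"
    and "range T \<inter> range \<gamma> = {0}"
    and "clinear_operator D\<Lambda> \<Lambda>"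
  shows "\<exists>B :: complex \<Rightarrow> 'e \<Rightarrow> 'e.
           analytic_op_function {z. boundedly_invertible (\<lambda>x. x - z *\<^sub>C T x)} B \<and>
           (\<forall>z \<in> {z. boundedly_invertible (\<lambda>x. x - z *\<^sub>C T x)}.
              fst ` Mgraph T \<gamma> \<Lambda> D\<Lambda> z = D\<Lambda> \<and>
              (\<forall>\<phi> \<psi> \<psi>0. (\<phi>, \<psi>) \<in> Mgraph T \<gamma> \<Lambda> D\<Lambda> z \<longrightarrow> (\<phi>, \<psi>0) \<in> Mgraph T \<gamma> \<Lambda> D\<Lambda> 0 \<longrightarrow>
                 B z \<phi> = \<psi> - \<psi>0))"
proof -
  interpret range_decomposition T \<gamma> using assms(1-5) by unfold_locales
  have adj: "bounded_clinear (adjoint_op \<gamma>)" by (rule bounded_clinear_adjoint_op[OF bounded_\<gamma>])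
  have M0: "Mgraph T \<gamma> \<Lambda> D\<Lambda> 0 = (\<lambda>\<phi>. (\<phi>, \<Lambda> \<phi>)) ` D\<Lambda>"
    using Mgraph_pencil_inv[OF boundedly_invertible_pencil_0]
    by (simp add: clinear_zero[OF bounded_clinear_clinear[OF adj]])
  show ?thesis
  proof (intro exI conjI ballI allI impI)
    show "analytic_op_function {z. boundedly_invertible (\<lambda>x. x - z *\<^sub>C T x)}
        (\<lambda>z x. adjoint_op \<gamma> (z *\<^sub>C pencil_inv T z (\<gamma> x)))"
      by (rule analytic_op_function_scaled_pencil_inv[OF bounded_T adj bounded_\<gamma>])
    fix z assume "z \<in> {z. boundedly_invertible (\<lambda>x. x - z *\<^sub>C T x)}"
    hence Mz: "Mgraph T \<gamma> \<Lambda> D\<Lambda> z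
        = (\<lambda>\<phi>. (\<phi>, adjoint_op \<gamma> (z *\<^sub>C pencil_inv T z (\<gamma> \<phi>)) + \<Lambda> \<phi>)) ` D\<Lambda>"
      by (simp add: Mgraph_pencil_inv)
    show "fst ` Mgraph T \<gamma> \<Lambda> D\<Lambda> z = D\<Lambda>" unfolding Mz by (simp add: image_image)
    fix \<phi> \<psi> \<psi>0
    assume "(\<phi>, \<psi>) \<in> Mgraph T \<gamma> \<Lambda> D\<Lambda> z" "(\<phi>, \<psi>0) \<in> Mgraph T \<gamma> \<Lambda> D\<Lambda> 0"
    thus "adjoint_op \<gamma> (z *\<^sub>C pencil_inv T z (\<gamma> \<phi>)) = \<psi> - \<psi>0" unfolding Mz M0 by auto
  qed
qed

end
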